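(* Fix integers $k \ge 3$ and $i \in \{2,\dots,k-1\}$, and let $T = \{1,\dots,k\}\setminus\{i\}$. Let $d \ge 1$ and $x \in \mathbb{Z}_k^d$. Then $\mathbb{Z}_k^d \setminus \{x\}$ is a disjoint union of copies of $T$ in $\mathbb{Z}_k^d$.
   Context: $\mathbb{Z}_k$ denotes the integers modulo $k$. A copy of $T$ in $\mathbb{Z}_k^d$ is a set of the form $\{x + j e_s : j \in \mathbb{Z}_k,\ j \ne j_0\}$ for some $x \in \mathbb{Z}_k^d$, $s \in \{1,\dots,d\}$ ($e_s$ the $s$-th unit vector) and $j_0 \in \mathbb{Z}_k$, i.e. a coordinate line with one point removed. *)

theory Defs
  imports Main "HOL-Library.Disjoint_Sets"
begin

text \<open>Points of Z_k^d are represented as lists of length d with entries in {0..<k}.\<close>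
definition grid :: "nat \<Rightarrow> nat \<Rightarrow> nat list set" where
  "grid k d = {xs. length xs = d \<and> (\<forall>a\<in>set xs. a < k)}"

text \<open>x + j e_s in Z_k^d (coordinates indexed 0..d-1).\<close>
definition shift :: "nat \<Rightarrow> nat list \<Rightarrow> nat \<Rightarrow> nat \<Rightarrow> nat list" where
  "shift k x s j = x[s := (x ! s + j) mod k]"

text \<open>A copy of T: a coordinate line with one point removed.\<close>
definition copyT :: "nat \<Rightarrow> nat \<Rightarrow> nat list set \<Rightarrow> bool" where
  "copyT k d C \<longleftrightarrow> (\<exists>x\<in>grid k d. \<exists>s<d. \<exists>j0<k.
      C = {shift k x s j | j. j < k \<and> j \<noteq> j0})"

end

theory Submission
  imports Defs
begin

text \<open>Sort each y \<noteq> x by the first coordinate s where it differs from x and by the point w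
  obtained from y by resetting coordinate s to x ! s. The points sharing the same pair (s, w) are
  exactly the points other than w on the line through w in direction s, i.e. a copy of T.\<close>

lemma partition_on_fibres: "partition_on A ((\<lambda>y. {z \<in> A. f z = f y}) ` A)"
  by (auto simp: partition_on_def disjoint_def)

lemma grid_list_update:
  "y \<in> grid k d \<Longrightarrow> a < k \<Longrightarrow> y[s := a] \<in> grid k d"
  by (auto simp: grid_def dest!: set_update_subset_insert[THEN subsetD])

lemma add_mod_diff_cancel:
  fixes a b k :: nat
  assumes "a < k" "b < k"
  shows "(a + (b + k - a) mod k) mod k = b"
proof -
  have "(a + (b + k - a) mod k) mod k = (a + (b + k - a)) mod k"
    by (simp add: mod_add_right_eq)
  also have "\<dots> = b"
    using assms by simp
  finally show ?thesis .
qed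

lemma shift_eq_self_iff:
  assumes "s < length w" "w ! s < k" "j < k"
  shows "shift k w s j = w \<longleftrightarrow> j = 0"
proof -
  have "(w ! s + j) mod k = w ! s \<longleftrightarrow> j = 0"
    using assms(2,3) by (cases "w ! s + j < k") (auto simp: le_mod_geq)
  then show ?thesis
    using assms(1) by (auto simp: shift_def list_update_same_conv)
qed

lemma coordinate_line_eq:
  assumes w: "w \<in> grid k d" and s: "s < d"
  shows "{shift k w s j | j. j < k} = {y \<in> grid k d. y[s := w ! s] = w}"
proof -
  have lw: "length w = d" and wsk: "w ! s < k"
    using w s by (auto simp: grid_def)
  show ?thesis
  proof (intro equalityI subsetI)
    fix y assume "y \<in> {shift k w s j | j. j < k}"
    then obtain j where "j < k" "y = shift k w s j"
      by blast
    then show "y \<in> {y \<in> grid k d. y[s := w ! s] = w}"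
      using w s lw by (simp add: shift_def grid_list_update)
  next
    fix y assume y: "y \<in> {y \<in> grid k d. y[s := w ! s] = w}"
    have ysk: "y ! s < k"
      using y s by (auto simp: grid_def)
    have "y = w[s := y ! s]"
      using y by (metis (mono_tags) mem_Collect_eq list_update_id list_update_overwrite)
    then have "shift k w s ((y ! s + k - w ! s) mod k) = y"
      by (simp add: shift_def add_mod_diff_cancel[OF wsk ysk])
    moreover have "(y ! s + k - w ! s) mod k < k"
      using wsk by simp
    ultimately show "y \<in> {shift k w s j | j. j < k}"
      by (metis (mono_tags, lifting) mem_Collect_eq)
  qed
qed

lemma punctured_coordinate_line_eq:
  assumes w: "w \<in> grid k d" and s: "s < d"
  shows "{shift k w s j | j. j < k \<and> j \<noteq> 0} = {y \<in> grid k d. y[s := w ! s] = w} - {w}"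
proof -
  have "s < length w" "w ! s < k"
    using w s by (auto simp: grid_def)
  then have "{shift k w s j | j. j < k \<and> j \<noteq> 0} = {shift k w s j | j. j < k} - {w}"
    by (auto simp: shift_eq_self_iff)
  then show ?thesis
    using coordinate_line_eq[OF w s] by simp
qed

definition first_diff :: "nat list \<Rightarrow> nat list \<Rightarrow> nat" where
  "first_diff x y = (LEAST t. y ! t \<noteq> x ! t)"

lemma first_diff_spec:
  assumes "length y = length x" "y \<noteq> x"
  shows "first_diff x y < length x" "y ! first_diff x y \<noteq> x ! first_diff x y"
    "\<And>t. t < first_diff x y \<Longrightarrow> y ! t = x ! t"
proof -
  obtain t where t: "t < length x" "y ! t \<noteq> x ! t"
    using assms by (metis nth_equalityI)
  show "y ! first_diff x y \<noteq> x ! first_diff x y"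
    unfolding first_diff_def by (rule LeastI[of _ t]) (fact t(2))
  have "first_diff x y \<le> t"
    unfolding first_diff_def by (rule Least_le) (fact t(2))
  then show "first_diff x y < length x"
    using t(1) by linarith
  show "\<And>u. u < first_diff x y \<Longrightarrow> y ! u = x ! u"
    unfolding first_diff_def using not_less_Least by blast
qed

lemma first_diff_eqI:
  "y ! s \<noteq> x ! s \<Longrightarrow> (\<And>t. t < s \<Longrightarrow> y ! t = x ! t) \<Longrightarrow> first_diff x y = s"
  unfolding first_diff_def by (rule Least_equality) (auto simp: not_less[symmetric])

definition line_key :: "nat list \<Rightarrow> nat list \<Rightarrow> nat \<times> nat list" where
  "line_key x y = (first_diff x y, y[first_diff x y := x ! first_diff x y])"

lemma line_key_fibre:
  assumes x: "x \<in> grid k d" and y: "y \<in> grid k d - {x}"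
    and s: "s = first_diff x y" and w: "w = y[s := x ! s]"
  shows "s < d" "w \<in> grid k d"
    "{z \<in> grid k d - {x}. line_key x z = line_key x y} = {z \<in> grid k d. z[s := w ! s] = w} - {w}"
proof -
  have lx: "length x = d" and ly: "length y = d" and yx: "y \<noteq> x"
    using x y by (auto simp: grid_def)
  show sd: "s < d"
    using first_diff_spec(1)[OF _ yx] lx ly s by simp
  have ws: "w ! s = x ! s"
    using w sd ly by simp
  have w_below: "w ! t = x ! t" if "t < s" for t
  proof -
    have "w ! t = y ! t"
      using w that by simp
    also have "\<dots> = x ! t"
      using first_diff_spec(3)[OF _ yx] that lx ly s by simp
    finally show ?thesis .
  qed
  have "x ! s < k"
    using x sd lx by (simp add: grid_def)
  then show "w \<in> grid k d"
    unfolding w using y by (simp add: grid_list_update)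
  show "{z \<in> grid k d - {x}. line_key x z = line_key x y} = {z \<in> grid k d. z[s := w ! s] = w} - {w}"
  proof (intro equalityI subsetI)
    fix z assume "z \<in> {z \<in> grid k d - {x}. line_key x z = line_key x y}"
    then have z: "z \<in> grid k d" "z \<noteq> x" and key: "line_key x z = line_key x y"
      by auto
    have "line_key x y = (s, w)"
      by (simp add: line_key_def s w)
    then have "(first_diff x z, z[first_diff x z := x ! first_diff x z]) = (s, w)"
      using key by (simp only: line_key_def)
    then have "first_diff x z = s" and zw: "z[s := x ! s] = w"
      by auto
    moreover have "length z = length x"
      using z(1) lx by (simp add: grid_def)
    ultimately have "z ! s \<noteq> w ! s"
      using first_diff_spec(2)[OF _ z(2)] ws by simp
    then show "z \<in> {z \<in> grid k d. z[s := w ! s] = w} - {w}"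
      using z(1) zw ws by auto
  next
    fix z assume "z \<in> {z \<in> grid k d. z[s := w ! s] = w} - {w}"
    then have z: "z \<in> grid k d" and zw: "z[s := w ! s] = w" and "z \<noteq> w"
      by auto
    have zs: "z ! s \<noteq> x ! s"
    proof
      assume "z ! s = x ! s"
      then have "z = w"
        using zw ws by (metis list_update_id)
      with \<open>z \<noteq> w\<close> show False ..
    qed
    have "z ! t = x ! t" if "t < s" for t
    proof -
      have "z ! t = w ! t"
        using zw that by (metis nth_list_update_neq less_not_refl)
      with w_below[OF that] show ?thesis by simp
    qed
    with zs have "first_diff x z = s"
      by (rule first_diff_eqI)
    moreover have "z \<noteq> x"
      using zs by auto
    ultimately show "z \<in> {z \<in> grid k d - {x}. line_key x z = line_key x y}"
      using z zw ws by (simp add: line_key_def s w)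
  qed
qed

theorem proposition4:
  fixes k i d :: nat and x :: "nat list"
  assumes "k \<ge> 3" and "2 \<le> i" and "i \<le> k - 1"
    and "d \<ge> 1" and "x \<in> grid k d"
  shows "\<exists>\<C>. (\<forall>C\<in>\<C>. copyT k d C) \<and> disjoint \<C> \<and> \<Union>\<C> = grid k d - {x}"
proof -
  let ?A = "grid k d - {x}"
  let ?\<C> = "(\<lambda>y. {z \<in> ?A. line_key x z = line_key x y}) ` ?A"
  have "copyT k d C" if "C \<in> ?\<C>" for C
  proof -
    obtain y where y: "y \<in> ?A" and C: "C = {z \<in> ?A. line_key x z = line_key x y}"
      using \<open>C \<in> ?\<C>\<close> by blast
    define s where "s = first_diff x y"
    define w where "w = y[s := x ! s]"
    note fibre = line_key_fibre[OF assms(5) y s_def w_def]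
    have "C = {shift k w s j | j. j < k \<and> j \<noteq> 0}"
      using C fibre(3) punctured_coordinate_line_eq[OF fibre(2,1)] by simp
    moreover have "0 < k"
      using assms(1) by simp
    ultimately show ?thesis
      unfolding copyT_def using fibre(1,2) by blast
  qed
  moreover have "partition_on ?A ?\<C>"
    by (rule partition_on_fibres)
  ultimately show ?thesis
    unfolding partition_on_def by (intro exI[of _ ?\<C>]) blast
qed

end
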